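(* Let $R$ be a ring and $S$ a multiplicatively closed subset of $R$ consisting of central regular elements. If $R$ is almost Armendariz, then the localization $S^{-1}R=\{u^{-1}a : u\in S, a\in R\}$ is almost Armendariz.
   Context: All rings are associative with identity. An element is regular if it is not a zero divisor (left or right). For a ring $R$, $P(R)$ denotes the prime radical of $R$ (the intersection of all prime ideals of $R$, equivalently the set of strongly nilpotent elements of $R$). A ring $R$ is called almost Armendariz if whenever $f(x)=\sum_{i=0}^m a_ix^i$ and $g(x)=\sum_{j=0}^n b_jx^j\in R[x]$ satisfy $f(x)g(x)=0$, then $a_ib_j\in P(R)$ for all $0\le i\le m$, $0\le j\le n$. *)

theory Defs
  imports Main
begin

definition two_sided_ideal :: "'a::ring_1 set \<Rightarrow> bool" where
  "two_sided_ideal I \<longleftrightarrow> 0 \<in> I \<and> (\<forall>x\<in>I. \<forall>y\<in>I. x - y \<in> I) \<and>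
     (\<forall>x\<in>I. \<forall>r. r * x \<in> I \<and> x * r \<in> I)"

definition prime_ideal_nc :: "'a::ring_1 set \<Rightarrow> bool" where
  "prime_ideal_nc P \<longleftrightarrow> two_sided_ideal P \<and> P \<noteq> UNIV \<and>
     (\<forall>a b. (\<forall>r. a * r * b \<in> P) \<longrightarrow> a \<in> P \<or> b \<in> P)"

definition prime_radical :: "'a::ring_1 set" where
  "prime_radical = \<Inter> {P. prime_ideal_nc P}"

text \<open>Polynomials f = sum a_i x^i (i \<le> m), g = sum b_j x^j (j \<le> n) are represented by
  their coefficient functions; f g = 0 means every coefficient
  sum_{i+j=k} a_i b_j of the product vanishes.\<close>
definition almost_armendariz :: "'a::ring_1 itself \<Rightarrow> bool" where
  "almost_armendariz (_::'a itself) \<longleftrightarrow>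
     (\<forall>(a::nat \<Rightarrow> 'a) (b::nat \<Rightarrow> 'a) (m::nat) (n::nat).
        (\<forall>i>m. a i = 0) \<longrightarrow> (\<forall>j>n. b j = 0) \<longrightarrow>
        (\<forall>k. (\<Sum>i\<le>k. a i * b (k - i)) = 0) \<longrightarrow>
        (\<forall>i\<le>m. \<forall>j\<le>n. a i * b j \<in> (prime_radical :: 'a set)))"

end

theory Submission
  imports Defs
begin

text \<open>Clear a common central denominator from the coefficients of f and g. The resulting
  polynomials over R again have product zero, because the embedding R \<rightarrow> S\<inverse>R is
  injective, so their coefficient products lie in P(R). The embedding maps P(R) into
  P(S\<inverse>R): the preimage of a prime ideal of S\<inverse>R is a prime ideal of R, since every
  element of S\<inverse>R is a central unit times an element of R. Multiplying back by the
  inverse denominators keeps each a_i b_j in the ideal P(S\<inverse>R).\<close>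

lemma prime_radical_mult_left:
  assumes "x \<in> (prime_radical :: 'a::ring_1 set)"
  shows "r * x \<in> prime_radical"
  using assms unfolding prime_radical_def prime_ideal_nc_def two_sided_ideal_def by blast

lemma almost_armendarizD:
  fixes a b :: "nat \<Rightarrow> 'a::ring_1"
  assumes "almost_armendariz TYPE('a)"
    and "\<forall>i>m. a i = 0" and "\<forall>j>n. b j = 0" and "\<And>k. (\<Sum>i\<le>k. a i * b (k - i)) = 0"
    and "i \<le> m" and "j \<le> n"
  shows "a i * b j \<in> prime_radical"
  using assms unfolding almost_armendariz_def by blast

lemma commute_inverse:
  fixes s u v :: "'a::ring_1"
  assumes "s * u = u * s" and "u * v = 1" and "v * u = 1"
  shows "s * v = v * s"
proof -
  have "s * v = v * u * s * v" using assms(3) by simp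
  also have "\<dots> = v * (s * u) * v" using assms(1) by (simp add: mult.assoc)
  also have "\<dots> = v * s" using assms(2) by (simp add: mult.assoc)
  finally show ?thesis .
qed

locale ring_1_hom =
  fixes \<phi> :: "'a::ring_1 \<Rightarrow> 'b::ring_1"
  assumes map_add: "\<And>x y. \<phi> (x + y) = \<phi> x + \<phi> y"
    and map_mult: "\<And>x y. \<phi> (x * y) = \<phi> x * \<phi> y"
    and map_one: "\<phi> 1 = 1"
begin

lemma map_zero: "\<phi> 0 = 0"
  using map_add[of 0 0] by simp

lemma map_diff: "\<phi> (x - y) = \<phi> x - \<phi> y"
  using map_add[of "x - y" y] by (simp add: algebra_simps)

lemma map_sum: "finite A \<Longrightarrow> \<phi> (sum f A) = (\<Sum>x\<in>A. \<phi> (f x))"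
  by (induction A rule: finite_induct) (simp_all add: map_zero map_add)

lemma two_sided_ideal_vimage:
  assumes "two_sided_ideal P"
  shows "two_sided_ideal (\<phi> -` P)"
  using assms unfolding two_sided_ideal_def by (auto simp: map_zero map_diff map_mult)

lemma prime_ideal_nc_vimage:
  assumes P: "prime_ideal_nc P"
    and central_times_image: "\<And>t. \<exists>v c. (\<forall>x. v * x = x * v) \<and> t = v * \<phi> c"
  shows "prime_ideal_nc (\<phi> -` P)"
proof -
  have ideal: "two_sided_ideal P" and proper: "P \<noteq> UNIV"
    and prime: "\<And>a b. \<forall>r. a * r * b \<in> P \<Longrightarrow> a \<in> P \<or> b \<in> P"
    using P unfolding prime_ideal_nc_def by blast+
  have P_mult: "\<And>x r. x \<in> P \<Longrightarrow> r * x \<in> P"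
    using ideal unfolding two_sided_ideal_def by blast
  have "\<phi> -` P \<noteq> UNIV"
  proof
    assume "\<phi> -` P = UNIV"
    then have "1 \<in> P" using map_one by (metis UNIV_I vimageE)
    then have "r \<in> P" for r using P_mult[of 1 r] by simp
    with proper show False by blast
  qed
  moreover have "a \<in> \<phi> -` P \<or> b \<in> \<phi> -` P" if ab: "\<forall>r. a * r * b \<in> \<phi> -` P" for a b
  proof -
    have "\<phi> a * t * \<phi> b \<in> P" for t
    proof -
      obtain v c where v: "\<forall>x. v * x = x * v" and t: "t = v * \<phi> c"
        using central_times_image by blast
      have "\<phi> a * t * \<phi> b = v * \<phi> (a * c * b)"
        using v t by (metis map_mult mult.assoc)
      then show ?thesis using ab P_mult by simp
    qed
    then show ?thesis using prime by simp
  qed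
  ultimately show ?thesis
    using two_sided_ideal_vimage[OF ideal] unfolding prime_ideal_nc_def by blast
qed

lemma map_prime_radical:
  assumes "x \<in> (prime_radical :: 'a set)"
    and "\<And>t. \<exists>v c. (\<forall>x. v * x = x * v) \<and> t = v * \<phi> c"
  shows "\<phi> x \<in> prime_radical"
  using assms prime_ideal_nc_vimage unfolding prime_radical_def by blast

end

text \<open>B plays the role of S\<inverse>R, with R embedded by \<phi>.\<close>

locale ring_1_localization = ring_1_hom \<phi>
  for S :: "'a::ring_1 set" and \<phi> :: "'a \<Rightarrow> 'b::ring_1" +
  assumes S_mult: "\<And>s t. s \<in> S \<Longrightarrow> t \<in> S \<Longrightarrow> s * t \<in> S"
    and S_central: "\<And>s r. s \<in> S \<Longrightarrow> s * r = r * s"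
    and inj: "inj \<phi>"
    and S_units: "\<And>s. s \<in> S \<Longrightarrow> \<exists>v. \<phi> s * v = 1 \<and> v * \<phi> s = 1"
    and fraction: "\<And>t. \<exists>u\<in>S. \<exists>a v. \<phi> u * v = 1 \<and> v * \<phi> u = 1 \<and> t = v * \<phi> a"
begin

lemma map_S_commute_map: "s \<in> S \<Longrightarrow> \<phi> s * \<phi> a = \<phi> a * \<phi> s"
  by (metis S_central map_mult)

lemma central_map_S:
  assumes s: "s \<in> S"
  shows "\<phi> s * t = t * \<phi> s"
proof -
  obtain u a v where u: "u \<in> S" "\<phi> u * v = 1" "v * \<phi> u = 1" and t: "t = v * \<phi> a"
    using fraction[of t] by blast
  have "\<phi> s * v = v * \<phi> s"
    using commute_inverse[OF map_S_commute_map[OF s, of u] u(2,3)] .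
  then show ?thesis
    using t map_S_commute_map[OF s, of a] by (metis mult.assoc)
qed

lemma central_inverse:
  assumes "s \<in> S" and "\<phi> s * v = 1" and "v * \<phi> s = 1"
  shows "v * t = t * v"
  using commute_inverse[OF central_map_S[OF assms(1), of t, symmetric] assms(2,3)] by simp

lemma central_times_image: "\<exists>v c. (\<forall>x. v * x = x * v) \<and> t = v * \<phi> c"
  using fraction[of t] central_inverse by blast

lemma common_denominator_pointwise:
  fixes a :: "nat \<Rightarrow> 'b" and m :: nat
  shows "\<exists>u\<in>S. \<forall>i\<le>m. \<exists>\<alpha>. \<phi> u * a i = \<phi> \<alpha>"
proof (induction m)
  case 0
  obtain u c v where u: "u \<in> S" "\<phi> u * v = 1" "a 0 = v * \<phi> c"
    using fraction[of "a 0"] by blast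
  then have "\<phi> u * a 0 = \<phi> c"
    by (simp add: mult.assoc[symmetric])
  then show ?case using u(1) by auto
next
  case (Suc m)
  then obtain u where u: "u \<in> S" "\<forall>i\<le>m. \<exists>\<alpha>. \<phi> u * a i = \<phi> \<alpha>" by blast
  obtain u' c v where u': "u' \<in> S" "\<phi> u' * v = 1" "a (Suc m) = v * \<phi> c"
    using fraction[of "a (Suc m)"] by blast
  have "\<exists>\<alpha>. \<phi> (u * u') * a i = \<phi> \<alpha>" if i: "i \<le> Suc m" for i
  proof (cases "i = Suc m")
    case True
    have "\<phi> (u * u') * a i = \<phi> u * (\<phi> u' * v) * \<phi> c"
      using True u'(3) by (simp add: map_mult mult.assoc)
    also have "\<dots> = \<phi> (u * c)"
      using u'(2) by (simp add: map_mult)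
    finally show ?thesis by blast
  next
    case False
    with i have "i \<le> m" by simp
    with u(2) obtain \<alpha> where "\<phi> u * a i = \<phi> \<alpha>" by blast
    then have "\<phi> (u * u') * a i = \<phi> (u' * \<alpha>)"
      using S_central[OF u(1), of u'] by (simp add: map_mult mult.assoc)
    then show ?thesis by blast
  qed
  then show ?case using S_mult[OF u(1) u'(1)] by blast
qed

lemma common_denominator:
  fixes a :: "nat \<Rightarrow> 'b" and m :: nat
  assumes "\<forall>i>m. a i = 0"
  shows "\<exists>u\<in>S. \<exists>\<alpha>. (\<forall>i>m. \<alpha> i = 0) \<and> (\<forall>i. \<phi> (\<alpha> i) = \<phi> u * a i)"
proof -
  obtain u where u: "u \<in> S" and "\<forall>i\<le>m. \<exists>\<alpha>. \<phi> u * a i = \<phi> \<alpha>"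
    using common_denominator_pointwise by blast
  then have "\<forall>i. \<exists>\<alpha>. i \<le> m \<longrightarrow> \<phi> u * a i = \<phi> \<alpha>" by blast
  from choice[OF this] obtain \<alpha>' where \<alpha>': "\<forall>i. i \<le> m \<longrightarrow> \<phi> u * a i = \<phi> (\<alpha>' i)"
    by blast
  define \<alpha> where "\<alpha> i = (if i \<le> m then \<alpha>' i else 0)" for i
  have "\<phi> (\<alpha> i) = \<phi> u * a i" for i
    using \<alpha>' assms by (auto simp: \<alpha>_def map_zero not_le)
  moreover have "\<forall>i>m. \<alpha> i = 0" by (simp add: \<alpha>_def)
  ultimately show ?thesis using u by blast
qed

lemma prime_radical_cancel_denominator:
  assumes "u \<in> S" and "\<phi> u * x \<in> prime_radical"
  shows "x \<in> prime_radical"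
proof -
  obtain v where "v * \<phi> u = 1" using S_units[OF assms(1)] by blast
  then have "x = v * (\<phi> u * x)" by (simp add: mult.assoc[symmetric])
  then show ?thesis using prime_radical_mult_left[OF assms(2), of v] by simp
qed

theorem almost_armendariz_localization:
  assumes R_aa: "almost_armendariz TYPE('a)"
  shows "almost_armendariz TYPE('b)"
  unfolding almost_armendariz_def
proof (intro allI impI)
  fix a b :: "nat \<Rightarrow> 'b" and m n i j :: nat
  assume az: "\<forall>i>m. a i = 0" and bz: "\<forall>j>n. b j = 0"
    and fg: "\<forall>k. (\<Sum>i\<le>k. a i * b (k - i)) = 0" and ij: "i \<le> m" "j \<le> n"
  obtain u \<alpha> where u: "u \<in> S" and \<alpha>z: "\<forall>i>m. \<alpha> i = 0" and \<alpha>: "\<And>i. \<phi> (\<alpha> i) = \<phi> u * a i"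
    using common_denominator[OF az] by blast
  obtain w \<beta> where w: "w \<in> S" and \<beta>z: "\<forall>j>n. \<beta> j = 0" and \<beta>: "\<And>j. \<phi> (\<beta> j) = \<phi> w * b j"
    using common_denominator[OF bz] by blast
  have cleared: "\<phi> (\<alpha> i * \<beta> j) = \<phi> (u * w) * (a i * b j)" for i j
  proof -
    have "\<phi> (\<alpha> i * \<beta> j) = \<phi> u * (a i * \<phi> w) * b j"
      by (simp add: map_mult \<alpha> \<beta> mult.assoc)
    also have "\<dots> = \<phi> u * (\<phi> w * a i) * b j"
      by (simp only: central_map_S[OF w])
    also have "\<dots> = \<phi> (u * w) * (a i * b j)"
      by (simp add: map_mult mult.assoc)
    finally show ?thesis .
  qed
  have \<alpha>\<beta>: "(\<Sum>i\<le>k. \<alpha> i * \<beta> (k - i)) = 0" for k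
  proof -
    have "\<phi> (\<Sum>i\<le>k. \<alpha> i * \<beta> (k - i)) = \<phi> (u * w) * (\<Sum>i\<le>k. a i * b (k - i))"
      by (simp add: map_sum cleared sum_distrib_left)
    then have "\<phi> (\<Sum>i\<le>k. \<alpha> i * \<beta> (k - i)) = \<phi> 0"
      using fg by (simp add: map_zero)
    then show ?thesis by (rule injD[OF inj])
  qed
  from R_aa \<alpha>z \<beta>z \<alpha>\<beta> ij have "\<alpha> i * \<beta> j \<in> prime_radical"
    by (rule almost_armendarizD)
  then have "\<phi> (\<alpha> i * \<beta> j) \<in> prime_radical"
    using central_times_image by (rule map_prime_radical)
  then have "\<phi> (u * w) * (a i * b j) \<in> prime_radical"
    by (simp only: cleared)
  then show "a i * b j \<in> prime_radical"
    by (rule prime_radical_cancel_denominator[OF S_mult[OF u w]])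
qed

end

theorem proposition2p7:
  fixes S :: "'a::ring_1 set"
    and \<phi> :: "'a \<Rightarrow> 'b::ring_1"
  assumes S_one: "1 \<in> S"
    and S_mult: "\<And>s t. s \<in> S \<Longrightarrow> t \<in> S \<Longrightarrow> s * t \<in> S"
    and S_central: "\<And>s r. s \<in> S \<Longrightarrow> s * r = r * s"
    and S_regular: "\<And>s r. s \<in> S \<Longrightarrow> s * r = 0 \<Longrightarrow> r = 0"
    and S_regular': "\<And>s r. s \<in> S \<Longrightarrow> r * s = 0 \<Longrightarrow> r = 0"
    and hom_add: "\<And>x y. \<phi> (x + y) = \<phi> x + \<phi> y"
    and hom_mult: "\<And>x y. \<phi> (x * y) = \<phi> x * \<phi> y"
    and hom_one: "\<phi> 1 = 1"
    and hom_inj: "inj \<phi>"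
    and S_units: "\<And>s. s \<in> S \<Longrightarrow> \<exists>v. \<phi> s * v = 1 \<and> v * \<phi> s = 1"
    and loc_elems: "\<And>t. \<exists>u\<in>S. \<exists>a v. \<phi> u * v = 1 \<and> v * \<phi> u = 1 \<and> t = v * \<phi> a"
    and R_aa: "almost_armendariz TYPE('a)"
  shows "almost_armendariz TYPE('b)"
proof -
  interpret ring_1_localization S \<phi>
    using hom_add hom_mult hom_one S_mult S_central hom_inj S_units loc_elems
    by unfold_locales
  show ?thesis using R_aa by (rule almost_armendariz_localization)
qed

end
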